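(* Assume the standing setting below and let $k\ge1$ be such that (R1)–(R3) hold. Let $\lambda\in\mathbb{R}$, let $\bar y\in\mathbb{R}^k$ have last component $0$, let $x=V_k\bar y$, and assume $J^{(k)}(\bar y,\lambda)$ is nonsingular. Define the projected Newton step $$\begin{pmatrix}\Delta y\\ \Delta\lambda\end{pmatrix}=-J^{(k)}(\bar y,\lambda)^{-1}F^{(k)}(\bar y,\lambda),\qquad \Delta x=V_k\Delta y.$$ Then $$\begin{pmatrix}\Delta x\\ \Delta\lambda\end{pmatrix}^T\nabla f(x,\lambda)=-\|F(x,\lambda)\|^2\le 0,$$ so $(\Delta x,\Delta\lambda)$ is a descent direction for $f$ at $(x,\lambda)$ whenever $F(x,\lambda)\ne0$.
   Context: Standing setting. $A\in\mathbb{R}^{m\times n}$ with $m\ge n$, $b\in\mathbb{R}^m$, $b\ne0$, $\sigma>0$, $\|\cdot\|$ the Euclidean norm. $F(x,\lambda)=\begin{pmatrix}\lambda A^T(Ax-b)+x\\ \tfrac12\|Ax-b\|^2-\tfrac{\sigma^2}{2}\end{pmatrix}$, with Jacobian $J(x,\lambda)=\begin{pmatrix}\lambda A^TA+I & A^T(Ax-b)\\ (Ax-b)^TA & 0\end{pmatrix}$, and merit function $f(x,\lambda)=\tfrac12\|F(x,\lambda)\|^2$ (so $\nabla f=J^TF$). Golub–Kahan bidiagonalization (Bidiag1): $u_0=b/\|b\|$, $\nu_0v_{-1}=0$, and for $j=0,1,2,\dots$: $r_j=A^Tu_j-\nu_jv_{j-1}$, $\mu_j=\|r_j\|$, $v_j=r_j/\mu_j$,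 $p_j=Av_j-\mu_ju_j$, $\nu_{j+1}=\|p_j\|$, $u_{j+1}=p_j/\nu_{j+1}$. No breakdown is assumed (all $\mu_j,\nu_j>0$), together with: (R1) $V_{k+1}=[v_0,\dots,v_k]$ and $U_{k+1}=[u_0,\dots,u_k]$ have orthonormal columns; (R2) $AV_k=U_{k+1}B_{k+1,k}$; (R3) $A^TU_{k+1}=V_kB_{k+1,k}^T+\mu_kv_ke_{k+1}^T$, where $V_k=[v_0,\dots,v_{k-1}]$, $e_{k+1}=(0,\dots,0,1)^T\in\mathbb{R}^{k+1}$, and $B_{k+1,k}\in\mathbb{R}^{(k+1)\times k}$ is lower bidiagonal with diagonal $\mu_0,\dots,\mu_{k-1}$ and subdiagonal $\nu_1,\dots,\nu_k$. $c_{k+1}=(\|b\|,0,\dots,0)^T\in\mathbb{R}^{k+1}$. $F^{(k)}(y,\lambda)=\begin{pmatrix}\lambda B_{k+1,k}^T(B_{k+1,k}y-c_{k+1})+y\\ \tfrac12\|B_{k+1,k}y-c_{k+1}\|^2-\tfrac{\sigma^2}{2}\end{pmatrix}$, $J^{(k)}(y,\lambda)=\begin{pmatrix}\lambda B_{k+1,k}^TB_{k+1,k}+I_k & B_{k+1,k}^T(B_{k+1,k}y-c_{k+1})\\ (B_{k+1,k}y-c_{k+1})^TB_{k+1,k} & 0\end{pmatrix}$. *)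

theory Defs
  imports "Jordan_Normal_Form.Gauss_Jordan_Elimination"
begin

definition vnorm :: "real vec \<Rightarrow> real" where
  "vnorm x = sqrt (x \<bullet> x)"

definition outer :: "real vec \<Rightarrow> real vec \<Rightarrow> real mat" where
  "outer x y = mat (dim_vec x) (dim_vec y) (\<lambda>(i,j). x $ i * y $ j)"

definition Fmap :: "real mat \<Rightarrow> real vec \<Rightarrow> real \<Rightarrow> real vec \<Rightarrow> real \<Rightarrow> real vec" where
  "Fmap A b \<sigma> x lam =
     (lam \<cdot>\<^sub>v (transpose_mat A *\<^sub>v (A *\<^sub>v x - b)) + x)
     @\<^sub>v vec 1 (\<lambda>_. (1/2) * (vnorm (A *\<^sub>v x - b))\<^sup>2 - \<sigma>\<^sup>2 / 2)"

definition Jmap :: "real mat \<Rightarrow> real vec \<Rightarrow> real vec \<Rightarrow> real \<Rightarrow> real mat" where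
  "Jmap A b x lam =
     four_block_mat
       (lam \<cdot>\<^sub>m (transpose_mat A * A) + 1\<^sub>m (dim_col A))
       (mat_of_cols (dim_col A) [transpose_mat A *\<^sub>v (A *\<^sub>v x - b)])
       (mat_of_rows (dim_col A) [transpose_mat A *\<^sub>v (A *\<^sub>v x - b)])
       (0\<^sub>m 1 1)"

definition merit :: "real mat \<Rightarrow> real vec \<Rightarrow> real \<Rightarrow> real vec \<Rightarrow> real \<Rightarrow> real" where
  "merit A b \<sigma> x lam = (1/2) * (vnorm (Fmap A b \<sigma> x lam))\<^sup>2"

definition grad_merit :: "real mat \<Rightarrow> real vec \<Rightarrow> real \<Rightarrow> real vec \<Rightarrow> real \<Rightarrow> real vec" where
  "grad_merit A b \<sigma> x lam = transpose_mat (Jmap A b x lam) *\<^sub>v Fmap A b \<sigma> x lam"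

(* Golub-Kahan bidiagonalization (Bidiag1) run up to step k without breakdown:
   u j, v j, mu j for j \<le> k and nu j for 1 \<le> j \<le> k; nu 0 v(-1) = 0. *)
definition bidiag1_upto ::
  "real mat \<Rightarrow> real vec \<Rightarrow> nat \<Rightarrow> (nat \<Rightarrow> real vec) \<Rightarrow> (nat \<Rightarrow> real vec)
     \<Rightarrow> (nat \<Rightarrow> real) \<Rightarrow> (nat \<Rightarrow> real) \<Rightarrow> bool" where
  "bidiag1_upto A b k u v mu nu \<longleftrightarrow>
     u 0 = (1 / vnorm b) \<cdot>\<^sub>v b \<and>
     (\<forall>j\<le>k. let r = (if j = 0 then transpose_mat A *\<^sub>v u 0
                       else transpose_mat A *\<^sub>v u j - nu j \<cdot>\<^sub>v v (j - 1))
             in mu j = vnorm r \<and> mu j > 0 \<and> v j = (1 / mu j) \<cdot>\<^sub>v r) \<and>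
     (\<forall>j<k. let p = A *\<^sub>v v j - mu j \<cdot>\<^sub>v u j
            in nu (j+1) = vnorm p \<and> nu (j+1) > 0 \<and> u (j+1) = (1 / nu (j+1)) \<cdot>\<^sub>v p)"

definition Vmat :: "nat \<Rightarrow> (nat \<Rightarrow> real vec) \<Rightarrow> nat \<Rightarrow> real mat" where
  "Vmat n v j = mat n j (\<lambda>(i,l). v l $ i)"

definition Bmat :: "(nat \<Rightarrow> real) \<Rightarrow> (nat \<Rightarrow> real) \<Rightarrow> nat \<Rightarrow> real mat" where
  "Bmat mu nu k = mat (k+1) k (\<lambda>(i,l). if i = l then mu l else if i = l + 1 then nu (l+1) else 0)"

definition cvec :: "real vec \<Rightarrow> nat \<Rightarrow> real vec" where
  "cvec b k = vec (k+1) (\<lambda>i. if i = 0 then vnorm b else 0)"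

definition Fk :: "real mat \<Rightarrow> real vec \<Rightarrow> real \<Rightarrow> real vec \<Rightarrow> real \<Rightarrow> real vec" where
  "Fk B c \<sigma> y lam = Fmap B c \<sigma> y lam"

definition Jk :: "real mat \<Rightarrow> real vec \<Rightarrow> real vec \<Rightarrow> real \<Rightarrow> real mat" where
  "Jk B c y lam = Jmap B c y lam"

end

theory Submission imports Defs begin

text \<open>Write \<open>V = V\<^sub>k\<close>, \<open>U = U\<^sub>k\<^sub>+\<^sub>1\<close>, \<open>B = B\<^sub>k\<^sub>+\<^sub>1\<^sub>,\<^sub>k\<close>, \<open>c = c\<^sub>k\<^sub>+\<^sub>1\<close> and \<open>x = V ybar\<close>.
  Since \<open>u\<^sub>0 = b / ||b||\<close> we have \<open>b = U c\<close>, so by (R2) the residual is \<open>Ax - b = U r\<close> with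
  \<open>r = B ybar - c\<close>. The last component of \<open>ybar\<close> vanishes, hence so does \<open>r\<^sub>k\<close>, and the
  rank-one term of (R3) drops out: \<open>A\<^sup>T(Ax - b) = V B\<^sup>T r\<close>. Therefore the isometry
  \<open>z \<mapsto> (V (z\<^sub>0,\<dots>,z\<^sub>k\<^sub>-\<^sub>1), z\<^sub>k)\<close> maps \<open>F\<^sup>(\<^sup>k\<^sup>)(ybar,\<lambda>)\<close> to \<open>F(x,\<lambda>)\<close> and pulls the bilinear form
  of \<open>J(x,\<lambda>)\<close> back to that of \<open>J\<^sup>(\<^sup>k\<^sup>)(ybar,\<lambda>)\<close>. The directional derivative of \<open>f\<close> along the
  lifted step is thus that of \<open>f\<^sup>(\<^sup>k\<^sup>) = ||F\<^sup>(\<^sup>k\<^sup>)||\<^sup>2/2\<close> along its own Newton step \<open>d\<close>, namely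
  \<open>d\<^sup>T J\<^sup>(\<^sup>k\<^sup>)\<^sup>T F\<^sup>(\<^sup>k\<^sup>) = -||F\<^sup>(\<^sup>k\<^sup>)||\<^sup>2 = -||F(x,\<lambda>)||\<^sup>2\<close>.\<close>

lemma scalar_prod_self_nonneg: "0 \<le> (x :: real vec) \<bullet> x"
  using conjugate_square_ge_0_vec[of x] by simp

lemma scalar_prod_self_pos:
  "(x :: real vec) \<in> carrier_vec N \<Longrightarrow> x \<noteq> 0\<^sub>v N \<Longrightarrow> 0 < x \<bullet> x"
  using conjugate_square_greater_0_vec[of x N] by simp

lemma vnorm_square: "(vnorm x)\<^sup>2 = x \<bullet> x"
  unfolding vnorm_def using scalar_prod_self_nonneg[of x] by simp

lemma scalar_prod_transpose_mat_vec:
  fixes M :: "'a :: comm_semiring_0 mat"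
  assumes "M \<in> carrier_mat r c" "p \<in> carrier_vec c" "q \<in> carrier_vec r"
  shows "p \<bullet> (transpose_mat M *\<^sub>v q) = q \<bullet> (M *\<^sub>v p)"
  using assms comm_scalar_prod[of p c "transpose_mat M *\<^sub>v q"] transpose_vec_mult_scalar[of M r c p q]
  by simp

lemma scalar_prod_orthonormal_cols:
  fixes M :: "real mat"
  assumes M: "M \<in> carrier_mat r c" and MM: "transpose_mat M * M = 1\<^sub>m c"
    and p: "p \<in> carrier_vec c" and q: "q \<in> carrier_vec c"
  shows "(M *\<^sub>v p) \<bullet> (M *\<^sub>v q) = p \<bullet> q"
proof -
  have "(M *\<^sub>v p) \<bullet> (M *\<^sub>v q) = (transpose_mat M *\<^sub>v (M *\<^sub>v p)) \<bullet> q"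
    using transpose_vec_mult_scalar[OF M q, of "M *\<^sub>v p"] M p by simp
  also have "transpose_mat M *\<^sub>v (M *\<^sub>v p) = p"
    using M p MM assoc_mult_mat_vec[of "transpose_mat M" c r M c p, symmetric] by simp
  finally show ?thesis .
qed

lemma smult_mat_mult_vec:
  fixes M :: "'a :: comm_semiring_0 mat"
  assumes "q \<in> carrier_vec (dim_col M)"
  shows "(c \<cdot>\<^sub>m M) *\<^sub>v q = c \<cdot>\<^sub>v (M *\<^sub>v q)"
  using assms by (intro eq_vecI) (simp_all add: scalar_prod_def sum_distrib_left mult.assoc)

lemma outer_mult_vec:
  assumes "z \<in> carrier_vec (dim_vec e)"
  shows "outer w e *\<^sub>v z = (e \<bullet> z) \<cdot>\<^sub>v w"
  using assms by (intro eq_vecI) (auto simp: outer_def scalar_prod_def sum_distrib_left ac_simps)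

lemma invertible_mat_inverse:
  fixes J :: "'a :: field mat"
  assumes J: "J \<in> carrier_mat N N" and inv: "invertible_mat J"
  obtains Ji where "mat_inverse J = Some Ji" "J * Ji = 1\<^sub>m N" "Ji \<in> carrier_mat N N"
proof -
  from inv obtain Ji where "inverts_mat J Ji" "inverts_mat Ji J"
    unfolding invertible_mat_def by blast
  then have JJi: "J * Ji = 1\<^sub>m N" and JiJ: "Ji * J = 1\<^sub>m (dim_row Ji)"
    using J by (auto simp: inverts_mat_def)
  have "Ji \<in> carrier_mat N N"
    using J arg_cong[OF JJi, of dim_col] arg_cong[OF JiJ, of dim_col] by auto
  then have "J \<in> Units (ring_mat TYPE('a) N ())"
    using J JJi JiJ by (auto simp: Units_def ring_mat_def)
  then obtain Ji' where "mat_inverse J = Some Ji'"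
    using mat_inverse(1)[OF J] by fastforce
  with mat_inverse(2)[OF J this] show ?thesis using that by auto
qed

lemma newton_step_scalar_prod:
  fixes J :: "real mat"
  assumes J: "J \<in> carrier_mat N N" and inv: "invertible_mat J" and F: "F \<in> carrier_vec N"
  shows "(- (the (mat_inverse J) *\<^sub>v F)) \<bullet> (transpose_mat J *\<^sub>v F) = - (F \<bullet> F)"
proof -
  obtain Ji where Ji: "mat_inverse J = Some Ji" and JJi: "J * Ji = 1\<^sub>m N"
    and Jic: "Ji \<in> carrier_mat N N"
    using invertible_mat_inverse[OF J inv] .
  have "J *\<^sub>v (Ji *\<^sub>v F) = F"
    using assoc_mult_mat_vec[OF J Jic F, symmetric] JJi F by simp
  then have "(Ji *\<^sub>v F) \<bullet> (transpose_mat J *\<^sub>v F) = F \<bullet> F"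
    using scalar_prod_transpose_mat_vec[OF J _ F, of "Ji *\<^sub>v F"] Jic F by simp
  then show ?thesis
    using Ji Jic J F by (subst scalar_prod_uminus_left) auto
qed

lemma Fmap_carrier: "y \<in> carrier_vec (dim_col A) \<Longrightarrow> Fmap A b \<sigma> y lam \<in> carrier_vec (dim_col A + 1)"
  unfolding Fmap_def by (intro carrier_vecI) simp

lemma Jmap_carrier: "Jmap A b x lam \<in> carrier_mat (dim_col A + 1) (dim_col A + 1)"
  unfolding Jmap_def by (intro four_block_carrier_mat) auto

lemma Jmap_bilinear:
  fixes A :: "real mat" and b x :: "real vec"
  assumes A: "A \<in> carrier_mat m n" and a: "a \<in> carrier_vec n" and dx: "dx \<in> carrier_vec n"
  defines "w \<equiv> transpose_mat A *\<^sub>v (A *\<^sub>v x - b)"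
  shows "(a @\<^sub>v vec 1 (\<lambda>_. s)) \<bullet> (Jmap A b x lam *\<^sub>v (dx @\<^sub>v vec 1 (\<lambda>_. t)))
           = lam * ((A *\<^sub>v a) \<bullet> (A *\<^sub>v dx)) + a \<bullet> dx + t * (a \<bullet> w) + s * (w \<bullet> dx)"
proof -
  let ?M = "lam \<cdot>\<^sub>m (transpose_mat A * A) + 1\<^sub>m n"
  have w: "w \<in> carrier_vec n" unfolding w_def using A by (intro carrier_vecI) simp
  have M: "?M \<in> carrier_mat n n" using A by simp
  have "Jmap A b x lam *\<^sub>v (dx @\<^sub>v vec 1 (\<lambda>_. t))
      = (?M *\<^sub>v dx + mat_of_cols n [w] *\<^sub>v vec 1 (\<lambda>_. t))
          @\<^sub>v (mat_of_rows n [w] *\<^sub>v dx + 0\<^sub>m 1 1 *\<^sub>v vec 1 (\<lambda>_. t))"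
    unfolding Jmap_def w_def[symmetric] carrier_matD(2)[OF A]
    by (rule four_block_mat_mult_vec[OF M _ _ _ dx]) auto
  also have "mat_of_cols n [w] *\<^sub>v vec 1 (\<lambda>_. t) = t \<cdot>\<^sub>v w"
    using w by (intro eq_vecI) (auto simp: mat_of_cols_def scalar_prod_def)
  also have "mat_of_rows n [w] *\<^sub>v dx + 0\<^sub>m 1 1 *\<^sub>v vec 1 (\<lambda>_. t) = vec 1 (\<lambda>_. w \<bullet> dx)"
    using w dx by (intro eq_vecI) (auto simp: mat_of_rows_def scalar_prod_def row_def)
  also have "?M *\<^sub>v dx = lam \<cdot>\<^sub>v (transpose_mat A *\<^sub>v (A *\<^sub>v dx)) + dx"
    using A dx by (simp add: add_mult_distrib_mat_vec[of _ n n] smult_mat_mult_vec)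
  finally have "Jmap A b x lam *\<^sub>v (dx @\<^sub>v vec 1 (\<lambda>_. t))
      = (lam \<cdot>\<^sub>v (transpose_mat A *\<^sub>v (A *\<^sub>v dx)) + dx + t \<cdot>\<^sub>v w) @\<^sub>v vec 1 (\<lambda>_. w \<bullet> dx)" .
  moreover have "a \<bullet> (transpose_mat A *\<^sub>v (A *\<^sub>v dx)) = (A *\<^sub>v a) \<bullet> (A *\<^sub>v dx)"
    using scalar_prod_transpose_mat_vec[OF A a, of "A *\<^sub>v dx"] A a dx
    by (simp add: comm_scalar_prod[of _ m])
  moreover have "vec 1 (\<lambda>_. s) \<bullet> vec 1 (\<lambda>_. r) = s * r" for r
    by (simp add: scalar_prod_def)
  ultimately show ?thesis
    using A a dx w
    by (simp add: scalar_prod_append[of a n _ 1 _ _] scalar_prod_add_distrib[of a n])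
qed

definition lift_vec :: "real mat \<Rightarrow> real vec \<Rightarrow> real vec" where
  "lift_vec V z = (V *\<^sub>v vec_first z (dim_col V)) @\<^sub>v vec 1 (\<lambda>_. z $ dim_col V)"

lemma lift_vec_carrier: "V \<in> carrier_mat n k \<Longrightarrow> lift_vec V z \<in> carrier_vec (n+1)"
  unfolding lift_vec_def by (intro carrier_vecI) simp

lemma vec_first_append_last:
  assumes "z \<in> carrier_vec (k+1)"
  shows "vec_first z k @\<^sub>v vec 1 (\<lambda>_. z $ k) = z"
proof -
  have "vec_last z 1 = vec 1 (\<lambda>_. z $ k)"
    using assms by (intro eq_vecI) (auto simp: vec_last_def)
  then show ?thesis using vec_first_last_append[OF assms] by simp
qed

lemma lift_vec_append:
  assumes V: "V \<in> carrier_mat n k" and a: "a \<in> carrier_vec k"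
  shows "lift_vec V (a @\<^sub>v vec 1 (\<lambda>_. s)) = (V *\<^sub>v a) @\<^sub>v vec 1 (\<lambda>_. s)"
proof -
  have "vec_first (a @\<^sub>v vec 1 (\<lambda>_. s)) k = a"
    using a by (intro eq_vecI) (auto simp: vec_first_def)
  moreover have "(a @\<^sub>v vec 1 (\<lambda>_. s)) $ k = s"
    using a by simp
  ultimately show ?thesis using V unfolding lift_vec_def by simp
qed

lemma vec_append_last_cases:
  assumes "z \<in> carrier_vec (k+1)"
  obtains a s where "a \<in> carrier_vec k" "z = a @\<^sub>v vec 1 (\<lambda>_. s)"
  using vec_first_append_last[OF assms] by (metis vec_first_carrier)

lemma scalar_prod_lift_vec:
  assumes V: "V \<in> carrier_mat n k" "transpose_mat V * V = 1\<^sub>m k"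
    and p: "p \<in> carrier_vec (k+1)" and q: "q \<in> carrier_vec (k+1)"
  shows "lift_vec V p \<bullet> lift_vec V q = p \<bullet> q"
proof -
  obtain a s where a: "a \<in> carrier_vec k" and pa: "p = a @\<^sub>v vec 1 (\<lambda>_. s)"
    using vec_append_last_cases[OF p] .
  obtain e t where e: "e \<in> carrier_vec k" and qe: "q = e @\<^sub>v vec 1 (\<lambda>_. t)"
    using vec_append_last_cases[OF q] .
  show ?thesis
    unfolding pa qe lift_vec_append[OF V(1) a] lift_vec_append[OF V(1) e]
    using V a e scalar_prod_orthonormal_cols[OF V a e]
    by (simp add: scalar_prod_append[of _ n _ 1] scalar_prod_append[of _ k _ 1])
qed

lemma Fmap_lift:
  fixes A B U V :: "real mat"
  assumes U: "U \<in> carrier_mat m (k+1)" "transpose_mat U * U = 1\<^sub>m (k+1)"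
    and V: "V \<in> carrier_mat n k" and B: "B \<in> carrier_mat (k+1) k"
    and c: "c \<in> carrier_vec (k+1)" and y: "y \<in> carrier_vec k"
    and res: "A *\<^sub>v (V *\<^sub>v y) - b = U *\<^sub>v (B *\<^sub>v y - c)"
    and grad: "transpose_mat A *\<^sub>v (A *\<^sub>v (V *\<^sub>v y) - b)
                 = V *\<^sub>v (transpose_mat B *\<^sub>v (B *\<^sub>v y - c))"
  shows "Fmap A b \<sigma> (V *\<^sub>v y) lam = lift_vec V (Fmap B c \<sigma> y lam)"
proof -
  let ?r = "B *\<^sub>v y - c"
  let ?w = "transpose_mat B *\<^sub>v ?r"
  have r: "?r \<in> carrier_vec (k+1)" and w: "?w \<in> carrier_vec k" using B c y by auto
  have "vnorm (U *\<^sub>v ?r) = vnorm ?r"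
    unfolding vnorm_def using scalar_prod_orthonormal_cols[OF U r r] by simp
  moreover have "V *\<^sub>v (lam \<cdot>\<^sub>v ?w + y) = lam \<cdot>\<^sub>v (V *\<^sub>v ?w) + V *\<^sub>v y"
    using V w y by (simp add: mult_add_distrib_mat_vec[OF V] mult_mat_vec[OF V])
  ultimately show ?thesis
    unfolding Fmap_def grad unfolding res using lift_vec_append[OF V] w y by simp
qed

lemma Jmap_lift:
  fixes A B U V :: "real mat"
  assumes A: "A \<in> carrier_mat m n"
    and U: "U \<in> carrier_mat m (k+1)" "transpose_mat U * U = 1\<^sub>m (k+1)"
    and V: "V \<in> carrier_mat n k" "transpose_mat V * V = 1\<^sub>m k"
    and B: "B \<in> carrier_mat (k+1) k" and AV: "A * V = U * B" and y: "y \<in> carrier_vec k"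
    and grad: "transpose_mat A *\<^sub>v (A *\<^sub>v (V *\<^sub>v y) - b)
                 = V *\<^sub>v (transpose_mat B *\<^sub>v (B *\<^sub>v y - c))"
    and p: "p \<in> carrier_vec (k+1)" and q: "q \<in> carrier_vec (k+1)"
  shows "lift_vec V p \<bullet> (Jmap A b (V *\<^sub>v y) lam *\<^sub>v lift_vec V q) = p \<bullet> (Jmap B c y lam *\<^sub>v q)"
proof -
  let ?w = "transpose_mat B *\<^sub>v (B *\<^sub>v y - c)"
  have w: "?w \<in> carrier_vec k" using B by (intro carrier_vecI) simp
  obtain a s where a: "a \<in> carrier_vec k" and pa: "p = a @\<^sub>v vec 1 (\<lambda>_. s)"
    using vec_append_last_cases[OF p] .
  obtain e t where e: "e \<in> carrier_vec k" and qe: "q = e @\<^sub>v vec 1 (\<lambda>_. t)"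
    using vec_append_last_cases[OF q] .
  have AVz: "A *\<^sub>v (V *\<^sub>v z) = U *\<^sub>v (B *\<^sub>v z)" if "z \<in> carrier_vec k" for z
    using that A V B U AV by (metis assoc_mult_mat_vec)
  have "(A *\<^sub>v (V *\<^sub>v a)) \<bullet> (A *\<^sub>v (V *\<^sub>v e)) = (B *\<^sub>v a) \<bullet> (B *\<^sub>v e)"
    unfolding AVz[OF a] AVz[OF e] using B a e by (intro scalar_prod_orthonormal_cols[OF U]) auto
  then show ?thesis
    unfolding pa qe lift_vec_append[OF V(1) a] lift_vec_append[OF V(1) e]
    using Jmap_bilinear[OF A, of "V *\<^sub>v a" "V *\<^sub>v e"] Jmap_bilinear[OF B a e] V a e w
      scalar_prod_orthonormal_cols[OF V a e] scalar_prod_orthonormal_cols[OF V a w]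
      scalar_prod_orthonormal_cols[OF V w e]
    by (simp add: grad)
qed

lemma projected_newton_descent:
  fixes A B U V :: "real mat" and \<sigma> lam :: real
  assumes A: "A \<in> carrier_mat m n"
    and U: "U \<in> carrier_mat m (k+1)" "transpose_mat U * U = 1\<^sub>m (k+1)"
    and V: "V \<in> carrier_mat n k" "transpose_mat V * V = 1\<^sub>m k"
    and B: "B \<in> carrier_mat (k+1) k" and c: "c \<in> carrier_vec (k+1)"
    and AV: "A * V = U * B" and y: "y \<in> carrier_vec k"
    and res: "A *\<^sub>v (V *\<^sub>v y) - b = U *\<^sub>v (B *\<^sub>v y - c)"
    and grad: "transpose_mat A *\<^sub>v (A *\<^sub>v (V *\<^sub>v y) - b)
                 = V *\<^sub>v (transpose_mat B *\<^sub>v (B *\<^sub>v y - c))"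
    and inv: "invertible_mat (Jmap B c y lam)"
  defines "d \<equiv> - (the (mat_inverse (Jmap B c y lam)) *\<^sub>v Fmap B c \<sigma> y lam)"
  shows "lift_vec V d \<bullet> grad_merit A b \<sigma> (V *\<^sub>v y) lam
           = - (vnorm (Fmap A b \<sigma> (V *\<^sub>v y) lam))\<^sup>2"
proof -
  let ?J = "Jmap B c y lam" and ?F = "Fmap B c \<sigma> y lam"
  have J: "?J \<in> carrier_mat (k+1) (k+1)" and F: "?F \<in> carrier_vec (k+1)"
    using Jmap_carrier[of B] Fmap_carrier[of y B] B y by auto
  obtain Ji where "mat_inverse ?J = Some Ji" "Ji \<in> carrier_mat (k+1) (k+1)"
    using invertible_mat_inverse[OF J inv] by blast
  then have d: "d \<in> carrier_vec (k+1)" unfolding d_def using F by auto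
  have lift_F: "Fmap A b \<sigma> (V *\<^sub>v y) lam = lift_vec V ?F"
    using Fmap_lift[OF U V(1) B c y res grad] .
  have "lift_vec V d \<bullet> grad_merit A b \<sigma> (V *\<^sub>v y) lam
      = lift_vec V ?F \<bullet> (Jmap A b (V *\<^sub>v y) lam *\<^sub>v lift_vec V d)"
    unfolding grad_merit_def lift_F
    using Jmap_carrier[of A] A lift_vec_carrier[OF V(1)]
    by (intro scalar_prod_transpose_mat_vec[of _ "n+1" "n+1"]) auto
  also have "\<dots> = ?F \<bullet> (?J *\<^sub>v d)"
    by (rule Jmap_lift[OF A U V B AV y grad F d])
  also have "\<dots> = d \<bullet> (transpose_mat ?J *\<^sub>v ?F)"
    using scalar_prod_transpose_mat_vec[OF J d F] by simp
  also have "\<dots> = - (?F \<bullet> ?F)"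
    unfolding d_def by (rule newton_step_scalar_prod[OF J inv F])
  also have "\<dots> = - (vnorm (Fmap A b \<sigma> (V *\<^sub>v y) lam))\<^sup>2"
    unfolding vnorm_square lift_F using scalar_prod_lift_vec[OF V F F] by simp
  finally show ?thesis .
qed

lemma Vmat_prefix_orthonormal:
  assumes "transpose_mat (Vmat n v j) * Vmat n v j = 1\<^sub>m j" and "i \<le> j"
  shows "transpose_mat (Vmat n v i) * Vmat n v i = 1\<^sub>m i"
proof (rule eq_matI)
  fix p q assume p: "p < dim_row (1\<^sub>m i)" and q: "q < dim_col (1\<^sub>m i)"
  have "(transpose_mat (Vmat n v i) * Vmat n v i) $$ (p, q)
      = (transpose_mat (Vmat n v j) * Vmat n v j) $$ (p, q)"
    using p q \<open>i \<le> j\<close> by (simp add: Vmat_def scalar_prod_def)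
  then show "(transpose_mat (Vmat n v i) * Vmat n v i) $$ (p, q) = 1\<^sub>m i $$ (p, q)"
    using assms p q by simp
qed (auto simp: Vmat_def)

lemma Vmat_mult_cvec:
  assumes b: "b \<in> carrier_vec m" "b \<noteq> 0\<^sub>v m" and u0: "u 0 = (1 / vnorm b) \<cdot>\<^sub>v b"
  shows "Vmat m u (k+1) *\<^sub>v cvec b k = b"
proof (rule eq_vecI)
  fix i assume "i < dim_vec b"
  then have i: "i < m" using b by simp
  have "vnorm b \<noteq> 0"
    unfolding vnorm_def using scalar_prod_self_pos[OF b] by simp
  moreover have "(Vmat m u (k+1) *\<^sub>v cvec b k) $ i = u 0 $ i * vnorm b"
    using i by (simp add: Vmat_def cvec_def scalar_prod_def if_distrib[of "(*) _"] sum.If_cases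
        del: sum.op_ivl_Suc)
  ultimately show "(Vmat m u (k+1) *\<^sub>v cvec b k) $ i = b $ i"
    using i b u0 by simp
qed (use b in \<open>simp add: Vmat_def\<close>)

lemma Bmat_residual_last:
  assumes y: "y \<in> carrier_vec k" and k: "1 \<le> k" and ylast: "y $ (k - 1) = 0"
  shows "(Bmat mu nu k *\<^sub>v y - cvec b k) $ k = 0"
proof -
  have "(Bmat mu nu k *\<^sub>v y) $ k = (\<Sum>l = 0..<k. Bmat mu nu k $$ (k, l) * y $ l)"
    using y by (simp add: Bmat_def scalar_prod_def row_def)
  also have "\<dots> = 0"
  proof (rule sum.neutral, intro ballI)
    fix l assume "l \<in> {0..<k}"
    then show "Bmat mu nu k $$ (k, l) * y $ l = 0"
      using ylast by (cases "k = l + 1") (auto simp: Bmat_def)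
  qed
  finally show ?thesis using y k by (simp add: cvec_def Bmat_def)
qed

lemma bidiag1_residual:
  fixes A :: "real mat"
  assumes A: "A \<in> carrier_mat m n" and b: "b \<in> carrier_vec m" "b \<noteq> 0\<^sub>v m"
    and bid: "bidiag1_upto A b k u v mu nu"
    and R2: "A * Vmat n v k = Vmat m u (k+1) * Bmat mu nu k"
    and R3: "transpose_mat A * Vmat m u (k+1)
               = Vmat n v k * transpose_mat (Bmat mu nu k)
                 + mu k \<cdot>\<^sub>m outer (v k) (unit_vec (k+1) k)"
    and y: "y \<in> carrier_vec k" and k: "1 \<le> k" and ylast: "y $ (k - 1) = 0"
  defines "V \<equiv> Vmat n v k" and "U \<equiv> Vmat m u (k+1)" and "B \<equiv> Bmat mu nu k"
    and "r \<equiv> Bmat mu nu k *\<^sub>v y - cvec b k"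
  shows "A *\<^sub>v (V *\<^sub>v y) - b = U *\<^sub>v r"
    and "transpose_mat A *\<^sub>v (A *\<^sub>v (V *\<^sub>v y) - b) = V *\<^sub>v (transpose_mat B *\<^sub>v r)"
proof -
  have V: "V \<in> carrier_mat n k" and U: "U \<in> carrier_mat m (k+1)"
    and B: "B \<in> carrier_mat (k+1) k"
    by (auto simp: V_def U_def B_def Vmat_def Bmat_def)
  have r: "r \<in> carrier_vec (k+1)"
    unfolding r_def by (intro carrier_vecI) (simp add: cvec_def)
  have "U *\<^sub>v cvec b k = b"
    unfolding U_def using b bid by (intro Vmat_mult_cvec) (auto simp: bidiag1_upto_def)
  moreover have "A *\<^sub>v (V *\<^sub>v y) = U *\<^sub>v (B *\<^sub>v y)"
    using R2 A V U B y unfolding V_def U_def B_def by (metis assoc_mult_mat_vec)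
  ultimately show res: "A *\<^sub>v (V *\<^sub>v y) - b = U *\<^sub>v r"
    unfolding r_def B_def[symmetric] using U B y
    by (simp add: mult_minus_distrib_mat_vec[OF U] cvec_def)
  have vk: "dim_vec (v k) = n"
    using arg_cong[OF R3, of dim_row] A by (simp add: outer_def)
  let ?E = "mu k \<cdot>\<^sub>m outer (v k) (unit_vec (k+1) k)"
  have E: "?E \<in> carrier_mat n (k+1)" using vk by (simp add: outer_def)
  have "outer (v k) (unit_vec (k+1) k) *\<^sub>v r = 0\<^sub>v n"
    using outer_mult_vec[of r] r vk Bmat_residual_last[OF y k ylast]
    unfolding r_def by (auto simp: cvec_def)
  then have Er: "?E *\<^sub>v r = 0\<^sub>v n"
    using r smult_mat_mult_vec[of r "outer (v k) (unit_vec (k+1) k)" "mu k"]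
    by (simp add: outer_def) (intro eq_vecI; simp)
  have "transpose_mat A *\<^sub>v (U *\<^sub>v r) = (transpose_mat A * U) *\<^sub>v r"
    using A U r by (intro assoc_mult_mat_vec[symmetric, of _ n m]) auto
  also have "\<dots> = (V * transpose_mat B + ?E) *\<^sub>v r"
    using R3 unfolding U_def V_def B_def by simp
  also have "\<dots> = V *\<^sub>v (transpose_mat B *\<^sub>v r)"
    using V B E r Er by (simp add: add_mult_distrib_mat_vec[of _ n "k+1"])
  finally show "transpose_mat A *\<^sub>v (A *\<^sub>v (V *\<^sub>v y) - b) = V *\<^sub>v (transpose_mat B *\<^sub>v r)"
    unfolding res .
qed

theorem theorem3p3:
  fixes A :: "real mat" and b :: "real vec" and \<sigma> :: real and m n k :: nat
    and u v :: "nat \<Rightarrow> real vec" and mu nu :: "nat \<Rightarrow> real"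
    and lam :: real and ybar :: "real vec"
  assumes A: "A \<in> carrier_mat m n" and mn: "m \<ge> n"
    and b: "b \<in> carrier_vec m" and b0: "b \<noteq> 0\<^sub>v m"
    and sig: "\<sigma> > 0"
    and k1: "k \<ge> 1"
    and bid: "bidiag1_upto A b k u v mu nu"
    and R1: "transpose_mat (Vmat n v (k+1)) * Vmat n v (k+1) = 1\<^sub>m (k+1)"
            "transpose_mat (Vmat m u (k+1)) * Vmat m u (k+1) = 1\<^sub>m (k+1)"
    and R2: "A * Vmat n v k = Vmat m u (k+1) * Bmat mu nu k"
    and R3: "transpose_mat A * Vmat m u (k+1)
               = Vmat n v k * transpose_mat (Bmat mu nu k)
                 + mu k \<cdot>\<^sub>m outer (v k) (unit_vec (k+1) k)"
    and y: "ybar \<in> carrier_vec k" and ylast: "ybar $ (k - 1) = 0"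
    and nonsing: "invertible_mat (Jk (Bmat mu nu k) (cvec b k) ybar lam)"
  shows
    "let x = Vmat n v k *\<^sub>v ybar;
         d = - (the (mat_inverse (Jk (Bmat mu nu k) (cvec b k) ybar lam))
                 *\<^sub>v Fk (Bmat mu nu k) (cvec b k) \<sigma> ybar lam);
         dy = vec_first d k; dl = d $ k;
         dx = Vmat n v k *\<^sub>v dy;
         g = grad_merit A b \<sigma> x lam;
         F = Fmap A b \<sigma> x lam
     in (dx @\<^sub>v vec 1 (\<lambda>_. dl)) \<bullet> g = - (vnorm F)\<^sup>2
        \<and> (dx @\<^sub>v vec 1 (\<lambda>_. dl)) \<bullet> g \<le> 0
        \<and> (F \<noteq> 0\<^sub>v (n+1) \<longrightarrow> (dx @\<^sub>v vec 1 (\<lambda>_. dl)) \<bullet> g < 0)"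
proof -
  define V U B c where "V = Vmat n v k" and "U = Vmat m u (k+1)"
    and "B = Bmat mu nu k" and "c = cvec b k"
  have V: "V \<in> carrier_mat n k" and U: "U \<in> carrier_mat m (k+1)"
    and B: "B \<in> carrier_mat (k+1) k" and c: "c \<in> carrier_vec (k+1)"
    by (auto simp: V_def U_def B_def c_def Vmat_def Bmat_def cvec_def)
  have VV: "transpose_mat V * V = 1\<^sub>m k"
    unfolding V_def using Vmat_prefix_orthonormal[OF R1(1)] by simp
  note residual = bidiag1_residual[OF A b b0 bid R2 R3 y k1 ylast,
      folded V_def U_def B_def c_def]
  define d where "d = - (the (mat_inverse (Jmap B c ybar lam)) *\<^sub>v Fmap B c \<sigma> ybar lam)"
  have descent: "lift_vec V d \<bullet> grad_merit A b \<sigma> (V *\<^sub>v ybar) lam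
      = - (vnorm (Fmap A b \<sigma> (V *\<^sub>v ybar) lam))\<^sup>2"
    unfolding d_def using nonsing R1(2) R2
    by (intro projected_newton_descent[OF A U _ V VV B c _ y residual])
      (simp_all add: Jk_def V_def U_def B_def c_def)
  have "Fmap A b \<sigma> (V *\<^sub>v ybar) lam \<in> carrier_vec (n+1)"
    using Fmap_carrier[of "V *\<^sub>v ybar" A] A V y by simp
  moreover have "lift_vec V d = (V *\<^sub>v vec_first d k) @\<^sub>v vec 1 (\<lambda>_. d $ k)"
    using V by (simp add: lift_vec_def)
  ultimately show ?thesis
    using descent scalar_prod_self_nonneg scalar_prod_self_pos[of _ "n+1"]
    unfolding Let_def Jk_def Fk_def V_def[symmetric] B_def[symmetric] c_def[symmetric]
      d_def[symmetric] vnorm_square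
    by auto
qed

end
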